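(* Let $\mathcal{C}$ be a code and let $m$ be its minimum neuron number. Then $\mathcal{C}$ is isomorphic to a reduced code $\mathcal{D}\subseteq 2^{[m]}$. Moreover this reduced representative is unique up to permutation of neurons: if $\mathcal{D}\subseteq 2^{[m]}$ and $\mathcal{D}'\subseteq 2^{[m']}$ are reduced codes both isomorphic to $\mathcal{C}$, then $m=m'$ and there is a permutation $w$ of $[m]$ with $\mathcal{D}'=\{w(d)\mid d\in\mathcal{D}\}$.
   Context: A code is a subset $\mathcal{C}\subseteq 2^{[n]}$; elements are codewords. For $\sigma\subseteq[n]$, $\mathrm{Tk}_{\mathcal{C}}(\sigma)=\{c\in\mathcal{C}\mid\sigma\subseteq c\}$, and $\mathrm{Tk}_{\mathcal{C}}(i)$ means $\mathrm{Tk}_{\mathcal{C}}(\{i\})$. A trunk in $\mathcal{C}$ is a subset of $\mathcal{C}$ that is empty or equal to $\mathrm{Tk}_{\mathcal{C}}(\sigma)$ for some $\sigma\subseteq[n]$. A function $f:\mathcal{C}\to\mathcal{D}$ between codes is a morphism if preimages of trunks in $\mathcal{D}$ are trunks in $\mathcal{C}$; an isomorphism is a morphism with an inverse function that is a morphism. A neuron $i\in[n]$ is trivial in $\mathcal{C}\subseteq 2^{[n]}$ if $\mathrm{Tk}_{\mathcal{C}}(i)=\emptyset$. A nontrivial neuron $i$ is redundant if there is $\sigma\subseteq[n]$ with $i\notin\sigma$ and $\mathrm{Tk}_{\mathcal{C}}(i)=\mathrm{Tk}_{\mathcal{C}}(\sigma)$. A code $\mathcal{C}\subseteq 2^{[n]}$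 is reduced if no neuron of $[n]$ is trivial or redundant. The minimum neuron number of $\mathcal{C}$ is the smallest $m$ such that $\mathcal{C}$ is isomorphic to a code contained in $2^{[m]}$. *)

theory Defs
  imports Main
begin

definition code :: "nat \<Rightarrow> nat set set \<Rightarrow> bool" where
  "code n C \<longleftrightarrow> C \<subseteq> Pow {1..n}"

definition Tk :: "nat set set \<Rightarrow> nat set \<Rightarrow> nat set set" where
  "Tk C \<sigma> = {c \<in> C. \<sigma> \<subseteq> c}"

definition trunk :: "nat \<Rightarrow> nat set set \<Rightarrow> nat set set \<Rightarrow> bool" where
  "trunk n C T \<longleftrightarrow> T = {} \<or> (\<exists>\<sigma>. \<sigma> \<subseteq> {1..n} \<and> T = Tk C \<sigma>)"

definition morphism :: "nat \<Rightarrow> nat set set \<Rightarrow> nat \<Rightarrow> nat set set \<Rightarrow> (nat set \<Rightarrow> nat set) \<Rightarrow> bool" where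
  "morphism n C m D f \<longleftrightarrow> (\<forall>c\<in>C. f c \<in> D) \<and>
     (\<forall>T. trunk m D T \<longrightarrow> trunk n C {c \<in> C. f c \<in> T})"

definition isomorphic :: "nat \<Rightarrow> nat set set \<Rightarrow> nat \<Rightarrow> nat set set \<Rightarrow> bool" where
  "isomorphic n C m D \<longleftrightarrow> (\<exists>f g. morphism n C m D f \<and> morphism m D n C g \<and>
     (\<forall>c\<in>C. g (f c) = c) \<and> (\<forall>d\<in>D. f (g d) = d))"

definition trivial_neuron :: "nat set set \<Rightarrow> nat \<Rightarrow> bool" where
  "trivial_neuron C i \<longleftrightarrow> Tk C {i} = {}"

definition redundant_neuron :: "nat \<Rightarrow> nat set set \<Rightarrow> nat \<Rightarrow> bool" where
  "redundant_neuron n C i \<longleftrightarrow> \<not> trivial_neuron C i \<and>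
     (\<exists>\<sigma>. \<sigma> \<subseteq> {1..n} \<and> i \<notin> \<sigma> \<and> Tk C {i} = Tk C \<sigma>)"

definition reduced :: "nat \<Rightarrow> nat set set \<Rightarrow> bool" where
  "reduced n C \<longleftrightarrow> (\<forall>i\<in>{1..n}. \<not> trivial_neuron C i \<and> \<not> redundant_neuron n C i)"

definition min_neuron_number :: "nat \<Rightarrow> nat set set \<Rightarrow> nat" where
  "min_neuron_number n C = (LEAST m. \<exists>D. code m D \<and> isomorphic n C m D)"

end

theory Submission
  imports Defs
begin

text \<open>Call a trunk irreducible if it is nonempty, proper, and not the intersection of the
  trunks strictly containing it. Their number is an isomorphism invariant, since an isomorphism
  induces a bijection between the trunk lattices. In a code on [n] every irreducible trunk is
  some Tk(i), so there are at most n of them; in a reduced code i \<mapsto> Tk(i) is a bijection onto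
  them. Conversely, relabelling each codeword by the set of irreducible trunks containing it
  gives an isomorphic reduced code with exactly that many neurons, because every nonempty trunk
  is the intersection of the irreducible trunks above it; so the minimum neuron number is the
  number of irreducible trunks. Finally, an isomorphism between two
  reduced codes maps Tk(i) to some Tk(w(i)), and this w is the required permutation.\<close>

text \<open>A trunk T is the intersection of the trunks strictly containing it unless some codeword
  outside T lies in all of them; that codeword witnesses irreducibility.\<close>
definition irreducible_trunks :: "nat \<Rightarrow> nat set set \<Rightarrow> nat set set set" where
  "irreducible_trunks n C = {T. trunk n C T \<and> T \<noteq> {} \<and> T \<noteq> C \<and>
     (\<exists>c\<in>C - T. \<forall>S. trunk n C S \<and> T \<subset> S \<longrightarrow> c \<in> S)}"

lemma trunk_subset: "trunk n C T \<Longrightarrow> T \<subseteq> C"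
  by (auto simp: trunk_def Tk_def)

lemma trunk_Tk: "\<sigma> \<subseteq> {1..n} \<Longrightarrow> trunk n C (Tk C \<sigma>)"
  by (auto simp: trunk_def)

lemma Tk_empty: "Tk C {} = C"
  by (auto simp: Tk_def)

lemma code_finite: "code n C \<Longrightarrow> finite C"
  unfolding code_def by (rule finite_subset[where B="Pow {1..n}"]) auto

lemma trunk_Inter:
  assumes "\<And>T. T \<in> \<T> \<Longrightarrow> trunk n C T"
  shows "trunk n C {c\<in>C. \<forall>T\<in>\<T>. c \<in> T}"
proof (cases "{} \<in> \<T>")
  case True
  then show ?thesis by (auto simp: trunk_def)
next
  case False
  with assms have "\<forall>T\<in>\<T>. \<exists>\<sigma>. \<sigma> \<subseteq> {1..n} \<and> T = Tk C \<sigma>"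
    unfolding trunk_def by blast
  then obtain s where s: "\<And>T. T \<in> \<T> \<Longrightarrow> s T \<subseteq> {1..n} \<and> T = Tk C (s T)"
    by metis
  have "{c\<in>C. \<forall>T\<in>\<T>. c \<in> T} = Tk C (\<Union>(s ` \<T>))"
  proof (rule set_eqI)
    fix c
    have "(\<forall>T\<in>\<T>. c \<in> T) \<longleftrightarrow> (\<forall>T\<in>\<T>. c \<in> Tk C (s T))"
      using s by (metis (no_types, lifting))
    then show "c \<in> {c\<in>C. \<forall>T\<in>\<T>. c \<in> T} \<longleftrightarrow> c \<in> Tk C (\<Union>(s ` \<T>))"
      unfolding Tk_def by blast
  qed
  moreover have "\<Union>(s ` \<T>) \<subseteq> {1..n}" using s by blast
  ultimately show ?thesis using trunk_Tk by simp
qed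

lemma irreducible_trunk_eq_Tk_singleton:
  assumes "T \<in> irreducible_trunks n C"
  shows "\<exists>i\<in>{1..n}. T = Tk C {i}"
proof -
  from assms obtain c0 where tT: "trunk n C T" and ne: "T \<noteq> {}" and c0: "c0 \<in> C" "c0 \<notin> T"
    and above: "\<forall>S. trunk n C S \<and> T \<subset> S \<longrightarrow> c0 \<in> S"
    unfolding irreducible_trunks_def by blast
  from tT ne obtain \<sigma> where \<sigma>: "\<sigma> \<subseteq> {1..n}" "T = Tk C \<sigma>"
    unfolding trunk_def by blast
  obtain i where i: "i \<in> \<sigma>" "i \<notin> c0" using c0 \<sigma> by (auto simp: Tk_def)
  have "T \<subseteq> Tk C {i}" using \<sigma> i by (auto simp: Tk_def)
  moreover have "trunk n C (Tk C {i})" using \<sigma> i by (intro trunk_Tk) auto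
  moreover have "c0 \<notin> Tk C {i}" using i by (auto simp: Tk_def)
  ultimately have "T = Tk C {i}" using above by blast
  then show ?thesis using \<sigma> i by blast
qed

lemma irreducible_trunks_subset: "irreducible_trunks n C \<subseteq> (\<lambda>i. Tk C {i}) ` {1..n}"
  by (blast dest: irreducible_trunk_eq_Tk_singleton)

lemma finite_irreducible_trunks: "finite (irreducible_trunks n C)"
  by (rule finite_subset[OF irreducible_trunks_subset]) simp

lemma card_irreducible_trunks_le: "card (irreducible_trunks n C) \<le> n"
proof -
  have "card (irreducible_trunks n C) \<le> card ((\<lambda>i. Tk C {i}) ` {1..n})"
    by (rule card_mono[OF _ irreducible_trunks_subset]) simp
  also have "\<dots> \<le> card {1..n}" by (rule card_image_le) simp
  finally show ?thesis by simp
qed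

lemma mem_trunk_if_mem_irreducible_supertrunks:
  assumes "finite C" and "trunk n C T" and "T \<noteq> {}" and "c \<in> C"
    and "\<forall>T'\<in>irreducible_trunks n C. T \<subseteq> T' \<longrightarrow> c \<in> T'"
  shows "c \<in> T"
  using assms(2-)
proof (induction "card C - card T" arbitrary: T rule: less_induct)
  case less
  show ?case
  proof (rule ccontr)
    assume cT: "c \<notin> T"
    with less.prems have "T \<notin> irreducible_trunks n C" "T \<noteq> C" by blast+
    with less.prems(1,2) cT obtain S where S: "trunk n C S" "T \<subset> S" "c \<notin> S"
      using \<open>c \<in> C\<close> unfolding irreducible_trunks_def by blast
    have "S \<subseteq> C" using S(1) trunk_subset by blast
    then have "card T < card S" "card S \<le> card C"
      using S(2) \<open>finite C\<close> by (auto intro: psubset_card_mono card_mono dest: finite_subset)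
    then have "card C - card S < card C - card T" by linarith
    then have "c \<in> S" using less.hyps S(1,2) less.prems(2,3,4) by blast
    with S(3) show False by blast
  qed
qed

lemma preimage_irreducible_trunk:
  assumes f: "morphism n C m D f" and g: "morphism m D n C g"
    and gf: "\<forall>c\<in>C. g (f c) = c" and fg: "\<forall>d\<in>D. f (g d) = d"
    and T: "T \<in> irreducible_trunks m D"
  shows "{c\<in>C. f c \<in> T} \<in> irreducible_trunks n C"
proof -
  from T obtain d0 where tT: "trunk m D T" and "T \<noteq> {}"
    and d0: "d0 \<in> D" "d0 \<notin> T" and above: "\<forall>S. trunk m D S \<and> T \<subset> S \<longrightarrow> d0 \<in> S"
    unfolding irreducible_trunks_def by blast
  let ?P = "{c\<in>C. f c \<in> T}"
  have TD: "T \<subseteq> D" using tT trunk_subset by blast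
  have fD: "\<forall>c\<in>C. f c \<in> D" and gC: "\<forall>d\<in>D. g d \<in> C"
    using f g unfolding morphism_def by auto
  have "trunk n C ?P" using f tT unfolding morphism_def by blast
  moreover have "?P \<noteq> {}"
  proof -
    obtain d where "d \<in> T" using \<open>T \<noteq> {}\<close> by blast
    then have "g d \<in> ?P" using TD gC fg by auto
    then show ?thesis by blast
  qed
  moreover have "g d0 \<in> C - ?P" using d0 gC fg by auto
  moreover have "g d0 \<in> S" if S: "trunk n C S" "?P \<subset> S" for S
  proof -
    let ?S' = "{d\<in>D. g d \<in> S}"
    have "trunk m D ?S'" using g S(1) unfolding morphism_def by blast
    moreover have "T \<subseteq> ?S'"
    proof
      fix d assume "d \<in> T"
      then have "g d \<in> ?P" using TD gC fg by auto
      then show "d \<in> ?S'" using \<open>d \<in> T\<close> TD S(2) by blast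
    qed
    moreover have "T \<noteq> ?S'"
    proof -
      obtain c where c: "c \<in> S" "c \<notin> ?P" using S(2) by blast
      then have "c \<in> C" using S(1) trunk_subset by blast
      with c fD gf have "f c \<in> ?S'" "f c \<notin> T" by auto
      then show ?thesis by blast
    qed
    ultimately have "d0 \<in> ?S'" using above by blast
    then show "g d0 \<in> S" by blast
  qed
  ultimately show ?thesis unfolding irreducible_trunks_def by blast
qed

lemma isomorphism_bij_irreducible_trunks:
  assumes f: "morphism n C m D f" and g: "morphism m D n C g"
    and gf: "\<forall>c\<in>C. g (f c) = c" and fg: "\<forall>d\<in>D. f (g d) = d"
  shows "bij_betw (\<lambda>T. {c\<in>C. f c \<in> T}) (irreducible_trunks m D) (irreducible_trunks n C)"
proof (rule bij_betw_byWitness[where f'="\<lambda>S. {d\<in>D. g d \<in> S}"])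
  have fD: "\<forall>c\<in>C. f c \<in> D" and gC: "\<forall>d\<in>D. g d \<in> C"
    using f g unfolding morphism_def by auto
  have sub: "T \<subseteq> E" if "T \<in> irreducible_trunks k E" for T k E
    using that trunk_subset unfolding irreducible_trunks_def by blast
  show "\<forall>T\<in>irreducible_trunks m D. {d\<in>D. g d \<in> {c\<in>C. f c \<in> T}} = T"
  proof
    fix T assume "T \<in> irreducible_trunks m D"
    then show "{d\<in>D. g d \<in> {c\<in>C. f c \<in> T}} = T" using sub[of T m D] gC fg by auto
  qed
  show "\<forall>S\<in>irreducible_trunks n C. {c\<in>C. f c \<in> {d\<in>D. g d \<in> S}} = S"
  proof
    fix S assume "S \<in> irreducible_trunks n C"
    then show "{c\<in>C. f c \<in> {d\<in>D. g d \<in> S}} = S" using sub[of S n C] fD gf by auto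
  qed
  show "(\<lambda>T. {c\<in>C. f c \<in> T}) ` irreducible_trunks m D \<subseteq> irreducible_trunks n C"
    using preimage_irreducible_trunk[OF f g gf fg] by blast
  show "(\<lambda>S. {d\<in>D. g d \<in> S}) ` irreducible_trunks n C \<subseteq> irreducible_trunks m D"
    using preimage_irreducible_trunk[OF g f fg gf] by blast
qed

lemma morphism_comp:
  assumes g: "morphism m D n C g" and f: "morphism n C p E f"
  shows "morphism m D p E (f \<circ> g)"
  unfolding morphism_def
proof (intro conjI allI impI)
  have gC: "\<forall>d\<in>D. g d \<in> C" and fE: "\<forall>c\<in>C. f c \<in> E"
    using f g unfolding morphism_def by auto
  then show "\<forall>d\<in>D. (f \<circ> g) d \<in> E" by simp
  fix T assume "trunk p E T"
  then have "trunk n C {c\<in>C. f c \<in> T}" using f unfolding morphism_def by blast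
  then have "trunk m D {d\<in>D. g d \<in> {c\<in>C. f c \<in> T}}" using g unfolding morphism_def by blast
  moreover have "{d\<in>D. g d \<in> {c\<in>C. f c \<in> T}} = {d\<in>D. (f \<circ> g) d \<in> T}"
    using gC by auto
  ultimately show "trunk m D {d\<in>D. (f \<circ> g) d \<in> T}" by simp
qed

lemma isomorphicE:
  assumes "isomorphic n C m D"
  obtains f g where "morphism n C m D f" "morphism m D n C g"
    "\<forall>c\<in>C. g (f c) = c" "\<forall>d\<in>D. f (g d) = d"
  using assms unfolding isomorphic_def by (elim exE conjE)

lemma isomorphicI:
  "\<lbrakk>morphism n C m D f; morphism m D n C g; \<forall>c\<in>C. g (f c) = c; \<forall>d\<in>D. f (g d) = d\<rbrakk>
    \<Longrightarrow> isomorphic n C m D"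
  unfolding isomorphic_def by (intro exI conjI)

lemma isomorphic_card_irreducible_trunks:
  assumes "isomorphic n C m D"
  shows "card (irreducible_trunks n C) = card (irreducible_trunks m D)"
proof -
  obtain f g where "morphism n C m D f" "morphism m D n C g"
    "\<forall>c\<in>C. g (f c) = c" "\<forall>d\<in>D. f (g d) = d"
    using assms by (rule isomorphicE)
  from isomorphism_bij_irreducible_trunks[OF this] show ?thesis
    by (simp add: bij_betw_same_card)
qed

lemma isomorphic_sym: "isomorphic n C m D \<Longrightarrow> isomorphic m D n C"
  by (elim isomorphicE) (rule isomorphicI)

lemma isomorphic_trans:
  assumes "isomorphic n C m D" and "isomorphic m D p E"
  shows "isomorphic n C p E"
proof -
  obtain f g where f: "morphism n C m D f" and g: "morphism m D n C g"
    and gf: "\<forall>c\<in>C. g (f c) = c" and fg: "\<forall>d\<in>D. f (g d) = d"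
    using assms(1) by (rule isomorphicE)
  obtain f' g' where f': "morphism m D p E f'" and g': "morphism p E m D g'"
    and gf': "\<forall>d\<in>D. g' (f' d) = d" and fg': "\<forall>e\<in>E. f' (g' e) = e"
    using assms(2) by (rule isomorphicE)
  have fD: "\<forall>c\<in>C. f c \<in> D" and g'D: "\<forall>e\<in>E. g' e \<in> D"
    using f g' unfolding morphism_def by auto
  have "\<forall>c\<in>C. (g \<circ> g') ((f' \<circ> f) c) = c"
    using fD gf gf' by simp
  moreover have "\<forall>e\<in>E. (f' \<circ> f) ((g \<circ> g') e) = e"
    using g'D fg fg' by simp
  ultimately show ?thesis
    using morphism_comp[OF f f'] morphism_comp[OF g' g] by (intro isomorphicI)
qed

lemma Tk_singleton_eq_Tk_supertrunk_neurons:
  assumes "\<forall>c\<in>C - Tk C {i}. \<exists>S. trunk n C S \<and> Tk C {i} \<subset> S \<and> c \<notin> S"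
  shows "Tk C {i} = Tk C {j\<in>{1..n}. j \<noteq> i \<and> Tk C {i} \<subseteq> Tk C {j}}"
    (is "_ = Tk C ?\<sigma>")
proof
  show "Tk C {i} \<subseteq> Tk C ?\<sigma>"
  proof
    fix c assume c: "c \<in> Tk C {i}"
    then have "?\<sigma> \<subseteq> c" by (auto simp: Tk_def)
    with c show "c \<in> Tk C ?\<sigma>" by (simp add: Tk_def)
  qed
  show "Tk C ?\<sigma> \<subseteq> Tk C {i}"
  proof
    fix c assume c: "c \<in> Tk C ?\<sigma>"
    then have "c \<in> C" "?\<sigma> \<subseteq> c" by (simp_all add: Tk_def)
    show "c \<in> Tk C {i}"
    proof (rule ccontr)
      assume "c \<notin> Tk C {i}"
      with \<open>c \<in> C\<close> assms obtain S where S: "trunk n C S" "Tk C {i} \<subset> S" "c \<notin> S"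
        by blast
      then obtain \<tau> where \<tau>: "\<tau> \<subseteq> {1..n}" "S = Tk C \<tau>"
        unfolding trunk_def by blast
      with S(3) \<open>c \<in> C\<close> obtain j where j: "j \<in> \<tau>" "j \<notin> c"
        by (auto simp: Tk_def)
      have "S \<subseteq> Tk C {j}" using \<tau>(2) j(1) by (auto simp: Tk_def)
      with S(2) \<tau>(1) j(1) have "j \<in> ?\<sigma>" by auto
      with \<open>?\<sigma> \<subseteq> c\<close> j(2) show False by blast
    qed
  qed
qed

lemma reduced_Tk_singleton_irreducible:
  assumes "reduced m D" and i: "i \<in> {1..m}"
  shows "Tk D {i} \<in> irreducible_trunks m D"
proof -
  from assms have ne: "Tk D {i} \<noteq> {}" and "\<not> redundant_neuron m D i"
    unfolding reduced_def trivial_neuron_def by auto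
  with ne have not_redundant: "\<And>\<sigma>. \<sigma> \<subseteq> {1..m} \<Longrightarrow> i \<notin> \<sigma> \<Longrightarrow> Tk D {i} \<noteq> Tk D \<sigma>"
    unfolding redundant_neuron_def trivial_neuron_def by blast
  have "Tk D {i} \<noteq> D" using not_redundant[of "{}"] by (simp add: Tk_empty)
  moreover have "trunk m D (Tk D {i})" using i by (intro trunk_Tk) auto
  moreover have "\<exists>c\<in>D - Tk D {i}. \<forall>S. trunk m D S \<and> Tk D {i} \<subset> S \<longrightarrow> c \<in> S"
  proof (rule ccontr)
    assume "\<not> ?thesis"
    then have "\<forall>c\<in>D - Tk D {i}. \<exists>S. trunk m D S \<and> Tk D {i} \<subset> S \<and> c \<notin> S"
      by blast
    then have "Tk D {i} = Tk D {j\<in>{1..m}. j \<noteq> i \<and> Tk D {i} \<subseteq> Tk D {j}}"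
      by (rule Tk_singleton_eq_Tk_supertrunk_neurons)
    moreover have "{j\<in>{1..m}. j \<noteq> i \<and> Tk D {i} \<subseteq> Tk D {j}} \<subseteq> {1..m}" by blast
    ultimately show False using not_redundant by blast
  qed
  ultimately show ?thesis using ne unfolding irreducible_trunks_def by blast
qed

lemma reduced_bij_irreducible_trunks:
  assumes "reduced m D"
  shows "bij_betw (\<lambda>i. Tk D {i}) {1..m} (irreducible_trunks m D)"
  unfolding bij_betw_def
proof
  show "inj_on (\<lambda>i. Tk D {i}) {1..m}"
  proof (rule inj_onI)
    fix i j assume i: "i \<in> {1..m}" and j: "j \<in> {1..m}" and eq: "Tk D {i} = Tk D {j}"
    show "i = j"
    proof (rule ccontr)
      assume "i \<noteq> j"
      with eq j have "redundant_neuron m D i \<or> trivial_neuron D i"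
        unfolding redundant_neuron_def by blast
      with assms i show False unfolding reduced_def by blast
    qed
  qed
  show "(\<lambda>i. Tk D {i}) ` {1..m} = irreducible_trunks m D"
    using reduced_Tk_singleton_irreducible[OF assms] irreducible_trunks_subset by blast
qed

locale irreducible_trunk_enumeration =
  fixes n k :: nat and C :: "nat set set" and e :: "nat \<Rightarrow> nat set set"
  assumes code: "code n C"
    and enum: "bij_betw e {1..k} (irreducible_trunks n C)"
begin

definition label :: "nat set \<Rightarrow> nat set" where
  "label c = {j\<in>{1..k}. c \<in> e j}"

lemma e_irreducible: "j \<in> {1..k} \<Longrightarrow> e j \<in> irreducible_trunks n C"
  using enum by (rule bij_betw_apply)

lemma ex_index: "T \<in> irreducible_trunks n C \<Longrightarrow> \<exists>j\<in>{1..k}. e j = T"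
  using enum unfolding bij_betw_def by (metis imageE)

lemma trunk_e: "j \<in> {1..k} \<Longrightarrow> trunk n C (e j)"
  using e_irreducible by (simp add: irreducible_trunks_def)

lemma e_subset: "j \<in> {1..k} \<Longrightarrow> e j \<subseteq> C"
  using trunk_e trunk_subset by blast

lemma code_label: "code k (label ` C)"
  unfolding code_def label_def by blast

lemma label_in_Tk_iff:
  assumes "c \<in> C" and "\<tau> \<subseteq> {1..k}"
  shows "label c \<in> Tk (label ` C) \<tau> \<longleftrightarrow> (\<forall>j\<in>\<tau>. c \<in> e j)"
  using assms unfolding Tk_def label_def by auto

lemma label_neq:
  assumes a: "a \<in> C" and b: "b \<in> C" and "i \<in> a" and "i \<notin> b"
  shows "label a \<noteq> label b"
proof -
  have "i \<in> {1..n}" using code a \<open>i \<in> a\<close> unfolding code_def by blast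
  then have "trunk n C (Tk C {i})" by (intro trunk_Tk) auto
  moreover have aT: "a \<in> Tk C {i}" and "b \<notin> Tk C {i}"
    using a \<open>i \<in> a\<close> \<open>i \<notin> b\<close> unfolding Tk_def by auto
  ultimately obtain T where T: "T \<in> irreducible_trunks n C" "Tk C {i} \<subseteq> T" "b \<notin> T"
    using mem_trunk_if_mem_irreducible_supertrunks[OF code_finite[OF code] _ _ b] by blast
  then obtain j where "j \<in> {1..k}" "e j = T" using ex_index by blast
  with T aT have "j \<in> label a" "j \<notin> label b" unfolding label_def by auto
  then show ?thesis by blast
qed

lemma inj_on_label: "inj_on label C"
proof (rule inj_onI)
  fix a b assume "a \<in> C" "b \<in> C" "label a = label b"
  then show "a = b" using label_neq by blast
qed

lemma morphism_label: "morphism n C k (label ` C) label"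
  unfolding morphism_def
proof (intro conjI allI impI)
  show "\<forall>c\<in>C. label c \<in> label ` C" by blast
  fix T assume T: "trunk k (label ` C) T"
  show "trunk n C {c\<in>C. label c \<in> T}"
  proof (cases "T = {}")
    case True
    then show ?thesis unfolding trunk_def by simp
  next
    case False
    then obtain \<tau> where \<tau>: "\<tau> \<subseteq> {1..k}" "T = Tk (label ` C) \<tau>"
      using T unfolding trunk_def by auto
    then have "{c\<in>C. label c \<in> T} = {c\<in>C. \<forall>T'\<in>e ` \<tau>. c \<in> T'}"
      using label_in_Tk_iff by auto
    moreover have "trunk n C {c\<in>C. \<forall>T'\<in>e ` \<tau>. c \<in> T'}"
      using trunk_e \<tau>(1) by (intro trunk_Inter) auto
    ultimately show ?thesis by simp
  qed
qed

lemma image_label_trunk: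
  assumes T: "trunk n C T" and "T \<noteq> {}"
  shows "label ` T = Tk (label ` C) {j\<in>{1..k}. T \<subseteq> e j}"
proof
  have "{j\<in>{1..k}. T \<subseteq> e j} \<subseteq> {1..k}" by blast
  then have in_Tk_iff: "label c \<in> Tk (label ` C) {j\<in>{1..k}. T \<subseteq> e j} \<longleftrightarrow>
      (\<forall>j\<in>{1..k}. T \<subseteq> e j \<longrightarrow> c \<in> e j)" if "c \<in> C" for c
    using label_in_Tk_iff[OF that] by blast
  show "label ` T \<subseteq> Tk (label ` C) {j\<in>{1..k}. T \<subseteq> e j}"
  proof
    fix d assume "d \<in> label ` T"
    then obtain c where c: "c \<in> T" "d = label c" by blast
    moreover have "c \<in> C" using c(1) T trunk_subset by blast
    ultimately show "d \<in> Tk (label ` C) {j\<in>{1..k}. T \<subseteq> e j}"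
      using in_Tk_iff by auto
  qed
  show "Tk (label ` C) {j\<in>{1..k}. T \<subseteq> e j} \<subseteq> label ` T"
  proof
    fix d assume d: "d \<in> Tk (label ` C) {j\<in>{1..k}. T \<subseteq> e j}"
    then obtain c where c: "c \<in> C" "d = label c" unfolding Tk_def by blast
    with d have "\<forall>j\<in>{1..k}. T \<subseteq> e j \<longrightarrow> c \<in> e j"
      using in_Tk_iff by blast
    then have "\<forall>T'\<in>irreducible_trunks n C. T \<subseteq> T' \<longrightarrow> c \<in> T'"
      using ex_index by blast
    then have "c \<in> T"
      using mem_trunk_if_mem_irreducible_supertrunks[OF code_finite[OF code] T \<open>T \<noteq> {}\<close> c(1)]
      by blast
    with c(2) show "d \<in> label ` T" by blast
  qed
qed

lemma morphism_inv_label: "morphism k (label ` C) n C (the_inv_into C label)"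
  unfolding morphism_def
proof (intro conjI allI impI)
  show "\<forall>d\<in>label ` C. the_inv_into C label d \<in> C"
    using inj_on_label by (auto intro: the_inv_into_into)
  fix T assume T: "trunk n C T"
  then have "T \<subseteq> C" by (rule trunk_subset)
  then have pre: "{d\<in>label ` C. the_inv_into C label d \<in> T} = label ` T"
    using inj_on_label by (auto simp: the_inv_into_f_f)
  show "trunk k (label ` C) {d\<in>label ` C. the_inv_into C label d \<in> T}"
  proof (cases "T = {}")
    case True
    then show ?thesis using pre unfolding trunk_def by simp
  next
    case False
    have "{j\<in>{1..k}. T \<subseteq> e j} \<subseteq> {1..k}" by blast
    then show ?thesis using pre image_label_trunk[OF T False] by (simp add: trunk_Tk)
  qed
qed

lemma isomorphic_label: "isomorphic n C k (label ` C)"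
  using morphism_label morphism_inv_label inj_on_label
  by (intro isomorphicI) (auto simp: the_inv_into_f_f)

lemma reduced_label: "reduced k (label ` C)"
  unfolding reduced_def
proof (intro ballI conjI)
  fix i assume i: "i \<in> {1..k}"
  have Tk_i: "Tk (label ` C) {i} = label ` e i"
    using i e_subset[OF i] label_in_Tk_iff[of _ "{i}"] by (auto simp: Tk_def)
  have "e i \<noteq> {}" using e_irreducible[OF i] unfolding irreducible_trunks_def by blast
  then show "\<not> trivial_neuron (label ` C) i" unfolding trivial_neuron_def Tk_i by simp
  show "\<not> redundant_neuron k (label ` C) i"
  proof
    assume "redundant_neuron k (label ` C) i"
    then obtain \<sigma> where \<sigma>: "\<sigma> \<subseteq> {1..k}" "i \<notin> \<sigma>" "Tk (label ` C) {i} = Tk (label ` C) \<sigma>"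
      unfolding redundant_neuron_def by blast
    obtain c0 where c0: "c0 \<in> C" "c0 \<notin> e i"
      and above: "\<forall>S. trunk n C S \<and> e i \<subset> S \<longrightarrow> c0 \<in> S"
      using e_irreducible[OF i] unfolding irreducible_trunks_def by blast
    have key: "c \<in> e i \<longleftrightarrow> (\<forall>l\<in>\<sigma>. c \<in> e l)" if "c \<in> C" for c
      using label_in_Tk_iff[OF that, of "{i}"] label_in_Tk_iff[OF that \<sigma>(1)] \<sigma>(3) i by simp
    have "c0 \<in> e l" if l: "l \<in> \<sigma>" for l
    proof -
      have lk: "l \<in> {1..k}" using l \<sigma>(1) by blast
      have "e i \<subseteq> e l" using key e_subset[OF i] l by blast
      moreover have "e i \<noteq> e l"
        using enum i lk l \<sigma>(2) unfolding bij_betw_def inj_on_def by blast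
      ultimately show ?thesis using above trunk_e[OF lk] by blast
    qed
    then show False using key[OF c0(1)] c0(2) by blast
  qed
qed

end

lemma ex_reduced_isomorphic_code:
  assumes "code n C"
  obtains D where "code (card (irreducible_trunks n C)) D"
    and "reduced (card (irreducible_trunks n C)) D"
    and "isomorphic n C (card (irreducible_trunks n C)) D"
proof -
  obtain e where "bij_betw e {1..card (irreducible_trunks n C)} (irreducible_trunks n C)"
    using ex_bij_betw_nat_finite_1[OF finite_irreducible_trunks] by blast
  with assms interpret irreducible_trunk_enumeration n "card (irreducible_trunks n C)" C e
    by unfold_locales
  from code_label reduced_label isomorphic_label show ?thesis by (rule that)
qed

lemma min_neuron_number_eq_card_irreducible_trunks:
  assumes "code n C"
  shows "min_neuron_number n C = card (irreducible_trunks n C)"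
  unfolding min_neuron_number_def
proof (rule Least_equality)
  obtain D where "code (card (irreducible_trunks n C)) D"
    and "isomorphic n C (card (irreducible_trunks n C)) D"
    using ex_reduced_isomorphic_code[OF assms] by blast
  then show "\<exists>D. code (card (irreducible_trunks n C)) D \<and>
      isomorphic n C (card (irreducible_trunks n C)) D" by blast
next
  fix m assume "\<exists>D. code m D \<and> isomorphic n C m D"
  then obtain D where "isomorphic n C m D" by blast
  then have "card (irreducible_trunks n C) = card (irreducible_trunks m D)"
    by (rule isomorphic_card_irreducible_trunks)
  also have "\<dots> \<le> m" by (rule card_irreducible_trunks_le)
  finally show "card (irreducible_trunks n C) \<le> m" .
qed

lemma isomorphic_reduced_codes_permute_neurons:
  assumes D: "code m D" "reduced m D" and D': "code m' D'" "reduced m' D'"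
    and "isomorphic m D m' D'"
  shows "\<exists>w. bij_betw w {1..m} {1..m'} \<and> D' = (\<lambda>d. w ` d) ` D"
proof -
  obtain h h' where h: "morphism m D m' D' h" and h': "morphism m' D' m D h'"
    and h'h: "\<forall>d\<in>D. h' (h d) = d" and hh': "\<forall>d\<in>D'. h (h' d) = d"
    using assms(5) by (rule isomorphicE)
  have hD': "\<forall>d\<in>D. h d \<in> D'" and h'D: "\<forall>d\<in>D'. h' d \<in> D"
    using h h' unfolding morphism_def by auto
  let ?\<iota> = "\<lambda>i. Tk D {i}" and ?\<iota>' = "\<lambda>j. Tk D' {j}"
    and ?\<Phi> = "\<lambda>T. {d\<in>D'. h' d \<in> T}"
  have \<iota>: "bij_betw ?\<iota> {1..m} (irreducible_trunks m D)"
    using D(2) by (rule reduced_bij_irreducible_trunks)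
  have \<iota>': "bij_betw ?\<iota>' {1..m'} (irreducible_trunks m' D')"
    using D'(2) by (rule reduced_bij_irreducible_trunks)
  have \<Phi>: "bij_betw ?\<Phi> (irreducible_trunks m D) (irreducible_trunks m' D')"
    using h' h hh' h'h by (rule isomorphism_bij_irreducible_trunks)
  define w where "w = the_inv_into {1..m'} ?\<iota>' \<circ> ?\<Phi> \<circ> ?\<iota>"
  have w: "bij_betw w {1..m} {1..m'}"
    unfolding w_def using \<iota> \<Phi> bij_betw_the_inv_into[OF \<iota>'] by (intro bij_betw_trans)
  have Tk_w: "Tk D' {w i} = ?\<Phi> (Tk D {i})" if "i \<in> {1..m}" for i
    unfolding w_def using f_the_inv_into_f_bij_betw[OF \<iota>'] bij_betwE[OF \<Phi>] bij_betwE[OF \<iota>] that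
    by simp
  have w_in_h: "w i \<in> h d \<longleftrightarrow> i \<in> d" if i: "i \<in> {1..m}" and d: "d \<in> D" for i d
  proof -
    have "w i \<in> h d \<longleftrightarrow> h d \<in> Tk D' {w i}" using hD' d unfolding Tk_def by auto
    also have "\<dots> \<longleftrightarrow> d \<in> Tk D {i}" using Tk_w[OF i] hD' h'h d by auto
    also have "\<dots> \<longleftrightarrow> i \<in> d" using d unfolding Tk_def by auto
    finally show ?thesis .
  qed
  have h_eq: "h d = w ` d" if d: "d \<in> D" for d
  proof
    have "h d \<subseteq> w ` {1..m}" using hD' d D'(1) w unfolding code_def bij_betw_def by blast
    then show "h d \<subseteq> w ` d" using w_in_h[OF _ d] by blast
    have "d \<subseteq> {1..m}" using D(1) d unfolding code_def by blast
    then show "w ` d \<subseteq> h d" using w_in_h[OF _ d] by blast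
  qed
  have "D' = h ` D"
  proof
    show "h ` D \<subseteq> D'" using hD' by blast
    show "D' \<subseteq> h ` D"
    proof
      fix d assume "d \<in> D'"
      then have "d = h (h' d)" "h' d \<in> D" using hh' h'D by auto
      then show "d \<in> h ` D" by (rule image_eqI)
    qed
  qed
  also have "\<dots> = (\<lambda>d. w ` d) ` D" using h_eq by (rule image_cong[OF refl])
  finally show ?thesis using w by blast
qed

theorem theorem1p2:
  fixes n m :: nat and C :: "nat set set"
  assumes "code n C"
    and "m = min_neuron_number n C"
  shows "(\<exists>D. code m D \<and> reduced m D \<and> isomorphic n C m D) \<and>
         (\<forall>D m' D'. code m D \<and> reduced m D \<and> isomorphic n C m D \<and>
             code m' D' \<and> reduced m' D' \<and> isomorphic n C m' D' \<longrightarrow>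
             m = m' \<and> (\<exists>w. bij_betw w {1..m} {1..m} \<and> D' = (\<lambda>d. w ` d) ` D))"
proof (intro conjI allI impI)
  have "m = card (irreducible_trunks n C)"
    using assms min_neuron_number_eq_card_irreducible_trunks by simp
  then show "\<exists>D. code m D \<and> reduced m D \<and> isomorphic n C m D"
    using ex_reduced_isomorphic_code[OF assms(1)] by metis
  fix D m' D'
  assume H: "code m D \<and> reduced m D \<and> isomorphic n C m D \<and>
    code m' D' \<and> reduced m' D' \<and> isomorphic n C m' D'"
  then have "isomorphic m D m' D'" using isomorphic_sym isomorphic_trans by blast
  with H obtain w where w: "bij_betw w {1..m} {1..m'}" "D' = (\<lambda>d. w ` d) ` D"
    using isomorphic_reduced_codes_permute_neurons by blast
  then show "m = m'" using bij_betw_same_card by fastforce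
  with w show "\<exists>w. bij_betw w {1..m} {1..m} \<and> D' = (\<lambda>d. w ` d) ` D" by blast
qed

end
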